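(* Let $d\ge2$ and let $\mathbf X=(X_1,\dots,X_d)$ be a continuous random vector with identical marginals having finite, non-zero variance. Then $\mathbf X\in\mathrm{IC}^d$ if and only if for every $i,j\in[d]$ with $i\ne j$ there exists $r_{ij}\in[0,1]$ such that $\frac{C_{ij}+C_{ji}}{2}=r_{ij}M+(1-r_{ij})\Pi$, where $C_{ij}$ denotes the copula of $(X_i,X_j)$.
   Context: $M(u,v)=\min(u,v)$, $\Pi(u,v)=uv$ on $[0,1]^2$. For $X,Y$ non-degenerate with finite variance, $(X,Y)$ has invariant correlation $r$ if $\mathrm{Corr}(X,Y)=\mathrm{Corr}(g(X),g(Y))=r$ for every measurable $g$ with $g(X),g(Y)$ non-degenerate with finite variance. $\mathbf X\in\mathrm{IC}^d$ means there is a correlation matrix $R=(r_{ij})$ such that $(X_i,X_j)$ has invariant correlation $r_{ij}$ for all $i,j\in[d]$. *)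

theory Defs
  imports "HOL-Probability.Probability"
begin

definition finite_var :: "'a measure \<Rightarrow> ('a \<Rightarrow> real) \<Rightarrow> bool" where
  "finite_var M Y \<longleftrightarrow> Y \<in> borel_measurable M \<and> integrable M (\<lambda>\<omega>. (Y \<omega>)^2)"

definition nondegenerate :: "'a measure \<Rightarrow> ('a \<Rightarrow> real) \<Rightarrow> bool" where
  "nondegenerate M Y \<longleftrightarrow> \<not> (\<exists>c. AE \<omega> in M. Y \<omega> = c)"

definition covar :: "'a measure \<Rightarrow> ('a \<Rightarrow> real) \<Rightarrow> ('a \<Rightarrow> real) \<Rightarrow> real" where
  "covar M X Y = (\<integral>\<omega>. (X \<omega> - (\<integral>\<omega>'. X \<omega>' \<partial>M)) * (Y \<omega> - (\<integral>\<omega>'. Y \<omega>' \<partial>M)) \<partial>M)"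

definition var :: "'a measure \<Rightarrow> ('a \<Rightarrow> real) \<Rightarrow> real" where
  "var M X = covar M X X"

definition corr :: "'a measure \<Rightarrow> ('a \<Rightarrow> real) \<Rightarrow> ('a \<Rightarrow> real) \<Rightarrow> real" where
  "corr M X Y = covar M X Y / sqrt (var M X * var M Y)"

definition inv_corr :: "'a measure \<Rightarrow> ('a \<Rightarrow> real) \<Rightarrow> ('a \<Rightarrow> real) \<Rightarrow> real \<Rightarrow> bool" where
  "inv_corr M X Y r \<longleftrightarrow>
     finite_var M X \<and> finite_var M Y \<and> nondegenerate M X \<and> nondegenerate M Y \<and>
     corr M X Y = r \<and>
     (\<forall>g \<in> borel_measurable (borel :: real measure).
        finite_var M (g \<circ> X) \<and> finite_var M (g \<circ> Y) \<and>
        nondegenerate M (g \<circ> X) \<and> nondegenerate M (g \<circ> Y) \<longrightarrow>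
        corr M (g \<circ> X) (g \<circ> Y) = r)"

definition correlation_matrix :: "nat \<Rightarrow> (nat \<Rightarrow> nat \<Rightarrow> real) \<Rightarrow> bool" where
  "correlation_matrix d R \<longleftrightarrow>
     (\<forall>i<d. R i i = 1) \<and> (\<forall>i<d. \<forall>j<d. R i j = R j i) \<and>
     (\<forall>x :: nat \<Rightarrow> real. 0 \<le> (\<Sum>i<d. \<Sum>j<d. x i * R i j * x j))"

definition IC :: "'a measure \<Rightarrow> nat \<Rightarrow> (nat \<Rightarrow> 'a \<Rightarrow> real) \<Rightarrow> bool" where
  "IC M d X \<longleftrightarrow> (\<exists>R. correlation_matrix d R \<and>
      (\<forall>i<d. \<forall>j<d. inv_corr M (X i) (X j) (R i j)))"

definition is_copula :: "(real \<Rightarrow> real \<Rightarrow> real) \<Rightarrow> bool" where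
  "is_copula C \<longleftrightarrow>
     (\<forall>u\<in>{0..1}. C u 0 = 0 \<and> C 0 u = 0 \<and> C u 1 = u \<and> C 1 u = u) \<and>
     (\<forall>u1 u2 v1 v2. 0 \<le> u1 \<and> u1 \<le> u2 \<and> u2 \<le> 1 \<and> 0 \<le> v1 \<and> v1 \<le> v2 \<and> v2 \<le> 1 \<longrightarrow>
        0 \<le> C u2 v2 - C u2 v1 - C u1 v2 + C u1 v1)"

definition cdf_of :: "'a measure \<Rightarrow> ('a \<Rightarrow> real) \<Rightarrow> real \<Rightarrow> real" where
  "cdf_of M X x = measure M {\<omega> \<in> space M. X \<omega> \<le> x}"

definition copula_of :: "'a measure \<Rightarrow> ('a \<Rightarrow> real) \<Rightarrow> ('a \<Rightarrow> real) \<Rightarrow> (real \<Rightarrow> real \<Rightarrow> real) \<Rightarrow> bool" where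
  "copula_of M X Y C \<longleftrightarrow> is_copula C \<and>
     (\<forall>x y. measure M {\<omega> \<in> space M. X \<omega> \<le> x \<and> Y \<omega> \<le> y} = C (cdf_of M X x) (cdf_of M Y y))"

end

theory Submission
  imports Defs
begin

(*
  Let F be the common marginal cdf and C_ij the copula of (X_i, X_j).  For the test function
  g = 1(-inf,a] + 1(-inf,b], invariance of the correlation r says
  E[g(X_i) g(X_j)] = r E[g(X_i)^2] + (1 - r) E[g(X_i)]^2.  Comparing a = b with a <> b isolates
  P(X_i <= x, X_j <= y) + P(X_j <= x, X_i <= y) = 2 (r min(F x, F y) + (1 - r) F x F y),
  which is (C_ij + C_ji)/2 = r M + (1 - r) Pi on the range of F: on the open unit square by
  continuity, and on its boundary because all copulas agree there.  r lies in [0,1] because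
  r M + (1 - r) Pi must be 2-increasing.

  Conversely, the identity says that the laws of (X_i, X_j) and (X_j, X_i) add up to 2 r times
  the law of (X_i, X_i) plus 2 (1 - r) times the law of two independent copies of X_i.
  Integrating (g x + g y)^2 against both sides gives the moment identity above for every g,
  and that identity is exactly corr(g(X_i), g(X_j)) = r.  Finally, pairwise invariance already
  gives IC^d, because every matrix of correlations is positive semidefinite.
*)

section \<open>Sums of measures and measures on the plane\<close>

definition add_measure :: "'a measure \<Rightarrow> 'a measure \<Rightarrow> 'a measure" where
  "add_measure A B = measure_of (space A) (sets A) (\<lambda>S. emeasure A S + emeasure B S)"

lemma sets_add_measure [simp, measurable_cong]: "sets (add_measure A B) = sets A"
  unfolding add_measure_def by (simp add: sets.sigma_sets_eq sets.space_closed)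

lemma space_add_measure [simp]: "space (add_measure A B) = space A"
  unfolding add_measure_def by simp

lemma emeasure_add_measure:
  assumes sets_eq: "sets B = sets A" and S: "S \<in> sets A"
  shows "emeasure (add_measure A B) S = emeasure A S + emeasure B S"
  unfolding add_measure_def
proof (rule emeasure_measure_of_sigma)
  show "countably_additive (sets A) (\<lambda>S. emeasure A S + emeasure B S)"
    unfolding countably_additive_def
  proof (intro allI impI)
    fix F :: "nat \<Rightarrow> 'a set" assume F: "range F \<subseteq> sets A" "disjoint_family F"
    then have "range F \<subseteq> sets B" using sets_eq by simp
    then show "(\<Sum>i. emeasure A (F i) + emeasure B (F i)) = emeasure A (\<Union>(range F)) + emeasure B (\<Union>(range F))"
      using F by (simp add: suminf_add[symmetric] suminf_emeasure)
  qed
qed (use S sets.sigma_algebra_axioms in \<open>auto simp: positive_def\<close>)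

lemma nn_integral_add_measure:
  assumes sets_eq: "sets B = sets A" and f: "f \<in> borel_measurable A"
  shows "integral\<^sup>N (add_measure A B) f = integral\<^sup>N A f + integral\<^sup>N B f"
proof -
  have "space B = space A" using sets_eq by (rule sets_eq_imp_space_eq)
  from f[folded sets_add_measure[of A B, THEN measurable_cong_sets, OF refl]] show ?thesis
  proof induction
    case (cong f g)
    then show ?case using \<open>space B = space A\<close> by (simp cong: nn_integral_cong_simp)
  next
    case (set S)
    then show ?case using sets_eq by (simp add: emeasure_add_measure)
  next
    case (mult u c)
    then show ?case using sets_eq by (simp add: nn_integral_cmult distrib_left)
  next
    case (add u v)
    then show ?case using sets_eq by (simp add: nn_integral_add algebra_simps)
  next
    case (seq U)
    have "\<And>i. U i \<in> borel_measurable A" "\<And>i. U i \<in> borel_measurable B"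
      using seq sets_eq by (auto cong: measurable_cong_sets)
    moreover have "incseq (\<lambda>i. integral\<^sup>N A (U i))" "incseq (\<lambda>i. integral\<^sup>N B (U i))"
      using \<open>incseq U\<close> by (auto simp: incseq_def le_fun_def intro!: nn_integral_mono)
    moreover have "(SUP i. U i) = (\<lambda>x. SUP i. U i x)" by (rule ext) (simp add: image_comp)
    ultimately show ?case
      using seq nn_integral_monotone_convergence_SUP[OF \<open>incseq U\<close>]
      by (simp add: ennreal_SUP_add)
  qed
qed

lemma measure_eqI_atMost:
  fixes N1 N2 :: "'a::ordered_euclidean_space measure"
  assumes sets: "sets N1 = sets borel" "sets N2 = sets borel"
    and eq: "\<And>a. emeasure N1 {..a} = emeasure N2 {..a}"
    and fin: "\<And>a. emeasure N1 {..a} \<noteq> \<infinity>"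
  shows "N1 = N2"
proof (rule measure_eqI_generator_eq[where E = "range atMost" and \<Omega> = UNIV
      and A = "\<lambda>n. {..real n *\<^sub>R One}"])
  show "Int_stable (range atMost :: 'a set set)"
  proof (clarsimp simp: Int_stable_def)
    fix a b :: 'a
    have "{..a} \<inter> {..b} = {..inf a b}" by auto
    then show "{..a} \<inter> {..b} \<in> range atMost" by blast
  qed
  show "sets N1 = sigma_sets UNIV (range atMost)" "sets N2 = sigma_sets UNIV (range atMost)"
    using sets by (simp_all add: borel_eq_atMost sets_measure_of)
  show "(\<Union>n. {..real n *\<^sub>R One}) = (UNIV :: 'a set)"
  proof safe
    fix x :: 'a
    obtain n :: nat where "norm x \<le> real n" using real_arch_simple by blast
    then have "x \<le> real n *\<^sub>R One"
      by (auto simp: eucl_le[where 'a='a] intro: order_trans[OF Basis_le_norm] abs_le_D1)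
    then show "x \<in> (\<Union>n. {..real n *\<^sub>R One})" by auto
  qed auto
qed (use eq fin in auto)

section \<open>Distribution functions and copulas\<close>

lemma cdf_of_eq_cdf:
  assumes "Y \<in> borel_measurable M"
  shows "cdf_of M Y = cdf (distr M borel Y)"
proof
  fix y
  have "{\<omega> \<in> space M. Y \<omega> \<le> y} = Y -` {..y} \<inter> space M" by auto
  then show "cdf_of M Y y = cdf (distr M borel Y) y"
    using assms by (simp add: cdf_of_def cdf_def measure_distr)
qed

definition joint_cdf :: "'a measure \<Rightarrow> ('a \<Rightarrow> real) \<Rightarrow> ('a \<Rightarrow> real) \<Rightarrow> real \<Rightarrow> real \<Rightarrow> real" where
  "joint_cdf M X Y x y = measure M {\<omega> \<in> space M. X \<omega> \<le> x \<and> Y \<omega> \<le> y}"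

lemma joint_cdf_eq_copula:
  assumes "copula_of M X Y C"
  shows "joint_cdf M X Y x y = C (cdf_of M X x) (cdf_of M Y y)"
  using assms by (simp add: copula_of_def joint_cdf_def)

context prob_space
begin

lemma AE_iff_of_subset_prob_eq:
  assumes "A \<in> events" "B \<in> events" "A \<subseteq> B" "prob A = prob B"
  shows "AE \<omega> in M. \<omega> \<in> A \<longleftrightarrow> \<omega> \<in> B"
proof -
  have "prob (B - A) = 0" using assms by (simp add: finite_measure_Diff)
  then have "B - A \<in> null_sets M" using assms by (simp add: null_sets_def emeasure_eq_measure)
  then have "AE \<omega> in M. \<omega> \<notin> B - A" by (rule AE_not_in)
  then show ?thesis using assms(3) by (auto elim: AE_mp)
qed

lemma is_copula_joint_cdf_uniform:
  assumes [measurable]: "U \<in> borel_measurable M" "V \<in> borel_measurable M"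
    and U_uniform: "\<And>u. 0 \<le> u \<Longrightarrow> u \<le> 1 \<Longrightarrow> prob {\<omega> \<in> space M. U \<omega> \<le> u} = u"
    and V_uniform: "\<And>v. 0 \<le> v \<Longrightarrow> v \<le> 1 \<Longrightarrow> prob {\<omega> \<in> space M. V \<omega> \<le> v} = v"
    and U_le_1: "\<And>\<omega>. U \<omega> \<le> 1" and V_le_1: "\<And>\<omega>. V \<omega> \<le> 1"
  shows "is_copula (joint_cdf M U V)"
proof -
  define C where "C u v = {\<omega> \<in> space M. U \<omega> \<le> u \<and> V \<omega> \<le> v}" for u v
  have [measurable]: "C u v \<in> events" for u v unfolding C_def by measurable
  have "prob (C u 0) \<le> prob {\<omega> \<in> space M. V \<omega> \<le> 0}" "prob (C 0 u) \<le> prob {\<omega> \<in> space M. U \<omega> \<le> 0}" for u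
    by (auto simp: C_def intro!: finite_measure_mono)
  then have "prob (C u 0) = 0" "prob (C 0 u) = 0" for u
    using U_uniform[of 0] V_uniform[of 0] by (simp_all add: measure_le_0_iff)
  moreover have "prob (C u 1) = u" "prob (C 1 u) = u" if "u \<in> {0..1}" for u
    using that U_uniform V_uniform U_le_1 V_le_1 by (simp_all add: C_def)
  moreover have "0 \<le> prob (C u2 v2) - prob (C u2 v1) - prob (C u1 v2) + prob (C u1 v1)"
    if "u1 \<le> u2" "v1 \<le> v2" for u1 u2 v1 v2
  proof -
    have "C u2 v1 \<inter> C u1 v2 = C u1 v1" "C u2 v1 \<union> C u1 v2 \<subseteq> C u2 v2"
      using that by (auto simp: C_def)
    then show ?thesis
      using measure_Un3[of "C u2 v1" M "C u1 v2"] finite_measure_mono[of "C u2 v1 \<union> C u1 v2" "C u2 v2"]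
      by (simp add: fmeasurable_eq_sets)
  qed
  ultimately show ?thesis unfolding is_copula_def C_def joint_cdf_def by simp
qed

lemma mono_cdf_of:
  assumes "Y \<in> borel_measurable M"
  shows "mono (cdf_of M Y)"
proof -
  interpret D: real_distribution "distr M borel Y" using assms by simp
  show ?thesis using D.cdf_nondecreasing by (simp add: cdf_of_eq_cdf[OF assms] mono_def)
qed

lemma cdf_of_le_1:
  assumes "Y \<in> borel_measurable M"
  shows "cdf_of M Y y \<le> 1"
proof -
  interpret D: real_distribution "distr M borel Y" using assms by simp
  show ?thesis using D.cdf_bounded_prob by (simp add: cdf_of_eq_cdf[OF assms])
qed

context
  fixes Y :: "'a \<Rightarrow> real"
  assumes Y [measurable]: "Y \<in> borel_measurable M"
    and atomless: "\<And>y. prob {\<omega> \<in> space M. Y \<omega> = y} = 0"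
begin

lemma isCont_cdf_of: "isCont (cdf_of M Y) y"
proof -
  interpret D: real_distribution "distr M borel Y" by simp
  have "Y -` {y} \<inter> space M = {\<omega> \<in> space M. Y \<omega> = y}" by auto
  then show ?thesis
    using atomless[of y] D.isCont_cdf by (simp add: cdf_of_eq_cdf measure_distr)
qed

lemma cdf_of_surj:
  assumes "0 < u" "u < 1"
  shows "\<exists>y. cdf_of M Y y = u"
proof -
  interpret D: real_distribution "distr M borel Y" by simp
  have "eventually (\<lambda>y. cdf_of M Y y < u) at_bot" "eventually (\<lambda>y. cdf_of M Y y > u) at_top"
    using D.cdf_lim_at_bot D.cdf_lim_at_top_prob assms by (simp_all add: cdf_of_eq_cdf order_tendstoD)
  then obtain a b where a: "cdf_of M Y a < u" and b: "cdf_of M Y b > u" and "a \<le> b"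
    by (metis eventually_at_bot_linorder eventually_at_top_linorder linear order_refl)
  then show ?thesis
    using IVT'[of "cdf_of M Y" a u b] isCont_cdf_of by (fastforce intro: continuous_at_imp_continuous_on)
qed

lemma cdf_of_sublevel_eq_atMost:
  assumes "u < 1" and "cdf_of M Y y\<^sub>0 \<le> u"
  shows "\<exists>s. cdf_of M Y s = u \<and> (\<forall>y. cdf_of M Y y \<le> u \<longleftrightarrow> y \<le> s)"
proof -
  interpret D: real_distribution "distr M borel Y" by simp
  let ?F = "cdf_of M Y" and ?S = "{y. cdf_of M Y y \<le> u}"
  have "eventually (\<lambda>y. ?F y > u) at_top"
    using D.cdf_lim_at_top_prob assms(1) by (simp add: cdf_of_eq_cdf order_tendstoD)
  then obtain b where b: "\<And>y. y \<ge> b \<Longrightarrow> ?F y > u" by (auto simp: eventually_at_top_linorder)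
  then have S_below_b: "y < b" if "y \<in> ?S" for y
    using that by (meson linorder_not_le not_less mem_Collect_eq)
  then have bdd: "bdd_above ?S" by (meson bdd_aboveI less_imp_le)
  define s where "s = Sup ?S"
  have "closed ?S"
    using isCont_cdf_of by (intro closed_Collect_le continuous_on_const) (auto intro: continuous_at_imp_continuous_on)
  moreover have "?S \<noteq> {}" using assms(2) by blast
  ultimately have "s \<in> ?S" unfolding s_def using bdd by (intro closed_contains_Sup)
  moreover have "continuous_on {s..b} ?F"
    using isCont_cdf_of by (intro continuous_at_imp_continuous_on) auto
  ultimately obtain t where "s \<le> t" "?F t = u"
    using IVT'[of ?F s u b] b[of b] S_below_b[of s] by auto
  moreover have "t \<le> s"
    unfolding s_def using bdd \<open>?F t = u\<close> by (intro cSup_upper) auto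
  ultimately have "?F s = u" by simp
  moreover have "?F y \<le> u \<longleftrightarrow> y \<le> s" for y
  proof
    assume "?F y \<le> u"
    then show "y \<le> s" unfolding s_def using bdd by (intro cSup_upper) auto
  next
    assume "y \<le> s"
    then have "?F y \<le> ?F s" by (rule monoD[OF mono_cdf_of[OF Y]])
    then show "?F y \<le> u" using \<open>?F s = u\<close> by simp
  qed
  ultimately show ?thesis by blast
qed

lemma prob_cdf_of_le:
  assumes u: "0 \<le> u" "u \<le> 1"
  shows "prob {\<omega> \<in> space M. cdf_of M Y (Y \<omega>) \<le> u} = u"
proof (cases "u = 1")
  case True
  then show ?thesis using cdf_of_le_1[OF Y] by (simp add: prob_space)
next
  case False
  show ?thesis
  proof (cases "\<exists>y. cdf_of M Y y \<le> u")
    case True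
    then obtain s where "cdf_of M Y s = u" "\<And>y. cdf_of M Y y \<le> u \<longleftrightarrow> y \<le> s"
      using cdf_of_sublevel_eq_atMost False u by (metis order_less_le)
    then show ?thesis by (simp add: cdf_of_def)
  next
    case False
    interpret D: real_distribution "distr M borel Y" by simp
    from False have "\<forall>\<^sub>F y in at_bot. u \<le> cdf_of M Y y" by (auto simp: not_le less_imp_le)
    then have "u \<le> 0"
      using D.cdf_lim_at_bot by (intro tendsto_lowerbound) (auto simp: cdf_of_eq_cdf)
    then show ?thesis using False u by simp
  qed
qed

lemma AE_cdf_of_le_iff: "AE \<omega> in M. cdf_of M Y (Y \<omega>) \<le> cdf_of M Y y \<longleftrightarrow> Y \<omega> \<le> y"
proof -
  let ?F = "cdf_of M Y"
  have [measurable]: "?F \<in> borel_measurable borel" using mono_cdf_of[OF Y] by (rule borel_measurable_mono)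
  have "0 \<le> ?F y" "?F y \<le> 1" using cdf_of_le_1[OF Y] by (simp_all add: cdf_of_def)
  then have "prob {\<omega> \<in> space M. Y \<omega> \<le> y} = prob {\<omega> \<in> space M. ?F (Y \<omega>) \<le> ?F y}"
    using prob_cdf_of_le[of "?F y"] unfolding cdf_of_def[of M Y y] by simp
  moreover have "{\<omega> \<in> space M. Y \<omega> \<le> y} \<subseteq> {\<omega> \<in> space M. ?F (Y \<omega>) \<le> ?F y}"
    using mono_cdf_of[OF Y] by (auto simp: mono_def)
  ultimately have "AE \<omega> in M. \<omega> \<in> {\<omega> \<in> space M. Y \<omega> \<le> y} \<longleftrightarrow> \<omega> \<in> {\<omega> \<in> space M. ?F (Y \<omega>) \<le> ?F y}"
    by (intro AE_iff_of_subset_prob_eq) simp_all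
  then show ?thesis by (rule AE_mp) (intro AE_I2, auto)
qed

end

lemma ex_copula_of:
  assumes [measurable]: "Y \<in> borel_measurable M" "Z \<in> borel_measurable M"
    and atomless: "\<And>y. prob {\<omega> \<in> space M. Y \<omega> = y} = 0" "\<And>z. prob {\<omega> \<in> space M. Z \<omega> = z} = 0"
  shows "\<exists>C. copula_of M Y Z C"
proof
  let ?F = "cdf_of M Y" and ?G = "cdf_of M Z"
  have [measurable]: "?F \<in> borel_measurable borel" "?G \<in> borel_measurable borel"
    using mono_cdf_of assms(1,2) by (auto intro: borel_measurable_mono)
  show "copula_of M Y Z (joint_cdf M (\<lambda>\<omega>. ?F (Y \<omega>)) (\<lambda>\<omega>. ?G (Z \<omega>)))"
    unfolding copula_of_def
  proof (intro conjI allI)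
    show "is_copula (joint_cdf M (\<lambda>\<omega>. ?F (Y \<omega>)) (\<lambda>\<omega>. ?G (Z \<omega>)))"
      using prob_cdf_of_le[OF _ atomless(1)] prob_cdf_of_le[OF _ atomless(2)] cdf_of_le_1
      by (intro is_copula_joint_cdf_uniform) auto
    fix y z
    have "AE \<omega> in M. (Y \<omega> \<le> y \<and> Z \<omega> \<le> z) \<longleftrightarrow> (?F (Y \<omega>) \<le> ?F y \<and> ?G (Z \<omega>) \<le> ?G z)"
      using AE_cdf_of_le_iff[OF _ atomless(1), of y] AE_cdf_of_le_iff[OF _ atomless(2), of z] by auto
    then show "prob {\<omega> \<in> space M. Y \<omega> \<le> y \<and> Z \<omega> \<le> z}
        = joint_cdf M (\<lambda>\<omega>. ?F (Y \<omega>)) (\<lambda>\<omega>. ?G (Z \<omega>)) (?F y) (?G z)"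
      unfolding joint_cdf_def by (intro measure_eq_AE) auto
  qed
qed

end

section \<open>Correlations\<close>

lemma integrable_mult_of_square_integrable:
  fixes f g :: "'a \<Rightarrow> real"
  assumes [measurable]: "f \<in> borel_measurable M" "g \<in> borel_measurable M"
    and "integrable M (\<lambda>x. (f x)^2)" "integrable M (\<lambda>x. (g x)^2)"
  shows "integrable M (\<lambda>x. f x * g x)"
proof (rule Bochner_Integration.integrable_bound)
  show "integrable M (\<lambda>x. (f x)^2 + (g x)^2)" using assms by simp
  have "\<bar>f x * g x\<bar> \<le> (f x)^2 + (g x)^2" for x
  proof -
    have "2 * (\<bar>f x\<bar> * \<bar>g x\<bar>) \<le> (f x)^2 + (g x)^2"
      using sum_squares_bound[of "\<bar>f x\<bar>" "\<bar>g x\<bar>"] by (simp add: mult.assoc)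
    moreover have "0 \<le> \<bar>f x\<bar> * \<bar>g x\<bar>" by simp
    ultimately show ?thesis unfolding abs_mult by linarith
  qed
  then show "AE x in M. norm (f x * g x) \<le> norm ((f x)^2 + (g x)^2)" by simp
qed measurable

lemma integral_comp_eq_of_distr_eq:
  fixes h :: "real \<Rightarrow> real"
  assumes [measurable]: "X \<in> borel_measurable M" "Y \<in> borel_measurable M" "h \<in> borel_measurable borel"
    and distr_eq: "distr M borel X = distr M borel Y"
  shows "integrable M (\<lambda>\<omega>. h (X \<omega>)) \<longleftrightarrow> integrable M (\<lambda>\<omega>. h (Y \<omega>))"
    and "(\<integral>\<omega>. h (X \<omega>) \<partial>M) = (\<integral>\<omega>. h (Y \<omega>) \<partial>M)"
  using integrable_distr_eq[of X M borel h] integrable_distr_eq[of Y M borel h]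
    integral_distr[of X M borel h] integral_distr[of Y M borel h] distr_eq by simp_all

lemma corr_sym: "corr M X Y = corr M Y X"
  unfolding corr_def covar_def var_def by (simp add: mult.commute)

lemma distr_comp_eq_of_distr_eq:
  assumes "X \<in> M \<rightarrow>\<^sub>M N" "Y \<in> M \<rightarrow>\<^sub>M N" "g \<in> N \<rightarrow>\<^sub>M L"
    and "distr M N X = distr M N Y"
  shows "distr M L (g \<circ> X) = distr M L (g \<circ> Y)"
  using distr_distr[OF assms(3,1)] distr_distr[OF assms(3,2)] assms(4) by simp

lemma finite_var_iff_distr:
  fixes U :: "'a \<Rightarrow> real"
  assumes [measurable]: "U \<in> borel_measurable M"
  shows "finite_var M U \<longleftrightarrow> integrable (distr M borel U) (\<lambda>x. x^2)"
  by (simp add: finite_var_def integrable_distr_eq)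

definition step_sum :: "real \<Rightarrow> real \<Rightarrow> real \<Rightarrow> real" where
  "step_sum a b z = indicator {..a} z + indicator {..b} z"

lemma borel_measurable_step_sum [measurable]: "step_sum a b \<in> borel_measurable borel"
  unfolding step_sum_def[abs_def] by measurable

context prob_space
begin

lemma covar_eq:
  assumes "integrable M U" "integrable M V" "integrable M (\<lambda>\<omega>. U \<omega> * V \<omega>)"
  shows "covar M U V = expectation (\<lambda>\<omega>. U \<omega> * V \<omega>) - expectation U * expectation V"
proof -
  have "(\<lambda>\<omega>. (U \<omega> - expectation U) * (V \<omega> - expectation V))
      = (\<lambda>\<omega>. U \<omega> * V \<omega> - expectation V * U \<omega> - expectation U * V \<omega> + expectation U * expectation V)"
    by (simp add: fun_eq_iff algebra_simps)
  then show ?thesis using assms by (simp add: covar_def prob_space)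
qed

lemma var_eq_variance: "var M U = variance U"
  by (simp add: var_def covar_def power2_eq_square)

lemma var_pos:
  assumes "finite_var M U" and "nondegenerate M U"
  shows "0 < var M U"
proof -
  have [measurable]: "U \<in> borel_measurable M" and sq: "integrable M (\<lambda>\<omega>. (U \<omega>)^2)"
    using assms(1) by (simp_all add: finite_var_def)
  have "integrable M U" using sq by (rule square_integrable_imp_integrable[rotated]) simp
  then have int: "integrable M (\<lambda>\<omega>. (U \<omega> - expectation U)^2)"
    using sq by (simp add: power2_diff)
  have "var M U \<noteq> 0"
  proof
    assume "var M U = 0"
    then have "AE \<omega> in M. (U \<omega> - expectation U)^2 = 0"
      using integral_nonneg_eq_0_iff_AE[OF int] by (simp add: var_eq_variance)
    then have "AE \<omega> in M. U \<omega> = expectation U" by eventually_elim simp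
    then show False using assms(2) unfolding nondegenerate_def by blast
  qed
  moreover have "0 \<le> var M U" unfolding var_eq_variance by (rule variance_positive)
  ultimately show ?thesis by linarith
qed

lemma corr_eq_iff_moment_identity:
  assumes [measurable]: "U \<in> borel_measurable M" "V \<in> borel_measurable M"
    and distr_eq: "distr M borel U = distr M borel V"
    and "finite_var M U" and "nondegenerate M U"
  shows "corr M U V = r \<longleftrightarrow>
    expectation (\<lambda>\<omega>. U \<omega> * V \<omega>) = r * expectation (\<lambda>\<omega>. (U \<omega>)^2) + (1 - r) * (expectation U)^2"
proof -
  note transfer = integral_comp_eq_of_distr_eq[OF assms(1,2) _ distr_eq]
  have sqU: "integrable M (\<lambda>\<omega>. (U \<omega>)^2)" using assms(4) by (simp add: finite_var_def)
  then have sqV: "integrable M (\<lambda>\<omega>. (V \<omega>)^2)" using transfer(1)[where h = "\<lambda>x. x^2"] by simp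
  have intU: "integrable M U" using sqU by (rule square_integrable_imp_integrable[rotated]) simp
  have intV: "integrable M V" using sqV by (rule square_integrable_imp_integrable[rotated]) simp
  have EV: "expectation V = expectation U" using transfer(2)[where h = "\<lambda>x. x"] by simp
  have "var M V = var M U"
    using transfer(2)[where h = "\<lambda>x. (x - expectation U)^2"] EV by (simp add: var_eq_variance)
  moreover have pos: "0 < var M U" using var_pos assms(4,5) .
  ultimately have "corr M U V = covar M U V / var M U"
    unfolding corr_def by simp
  also have "\<dots> = r \<longleftrightarrow> covar M U V = r * var M U"
    using pos by (simp add: divide_eq_eq)
  also have "covar M U V = expectation (\<lambda>\<omega>. U \<omega> * V \<omega>) - (expectation U)^2"
    using covar_eq[OF intU intV integrable_mult_of_square_integrable[OF assms(1,2) sqU sqV]] EV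
    by (simp add: power2_eq_square)
  also have "var M U = expectation (\<lambda>\<omega>. (U \<omega>)^2) - (expectation U)^2"
    using intU sqU by (simp add: var_eq_variance variance_eq)
  finally show ?thesis by (simp add: algebra_simps)
qed

lemma corr_self:
  assumes "finite_var M U" and "nondegenerate M U"
  shows "corr M U U = 1"
  using corr_eq_iff_moment_identity[OF _ _ refl assms] assms(1)
  by (simp add: finite_var_def power2_eq_square)

lemma inv_corr_self:
  assumes "finite_var M X" and "nondegenerate M X"
  shows "inv_corr M X X 1"
  using assms corr_self unfolding inv_corr_def by blast

lemma nondegenerate_if_atomless:
  assumes [measurable]: "X \<in> borel_measurable M"
    and atomless: "\<And>x. prob {\<omega> \<in> space M. X \<omega> = x} = 0"
  shows "nondegenerate M X"
  unfolding nondegenerate_def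
proof
  assume "\<exists>c. AE \<omega> in M. X \<omega> = c"
  then obtain c where "AE \<omega> in M. X \<omega> = c" by blast
  then have "prob {\<omega> \<in> space M. X \<omega> = c} = 1" by (simp add: prob_eq_1)
  then show False using atomless[of c] by simp
qed

lemma nondegenerate_iff_distr:
  fixes U :: "'a \<Rightarrow> real"
  assumes [measurable]: "U \<in> borel_measurable M"
  shows "nondegenerate M U \<longleftrightarrow> (\<forall>c. measure (distr M borel U) {c} \<noteq> 1)"
proof -
  have "measure (distr M borel U) {c} = prob {\<omega> \<in> space M. U \<omega> = c}" for c
  proof -
    have "U -` {c} \<inter> space M = {\<omega> \<in> space M. U \<omega> = c}" by auto
    then show ?thesis by (simp add: measure_distr)
  qed
  then show ?thesis unfolding nondegenerate_def by (simp add: prob_eq_1)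
qed

lemma nondegenerate_if_two_values:
  fixes W :: "'a \<Rightarrow> real"
  assumes [measurable]: "W \<in> borel_measurable M"
    and "prob {\<omega> \<in> space M. W \<omega> = a} > 0" "prob {\<omega> \<in> space M. W \<omega> = b} > 0" "a \<noteq> b"
  shows "nondegenerate M W"
  unfolding nondegenerate_def
proof
  assume "\<exists>c. AE \<omega> in M. W \<omega> = c"
  then obtain c where c: "AE \<omega> in M. W \<omega> = c" by blast
  have "prob {\<omega> \<in> space M. W \<omega> = d} = 0" if "d \<noteq> c" for d
    using c that by (intro prob_eq_0_AE) (auto elim: AE_mp)
  then show False using assms(2-4) by (cases "a = c") auto
qed

lemma expectation_indicator_atMost_mult:
  fixes Y Z :: "'a \<Rightarrow> real"
  assumes [measurable]: "Y \<in> borel_measurable M" "Z \<in> borel_measurable M"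
  shows "integrable M (\<lambda>\<omega>. indicator {..a} (Y \<omega>) * indicator {..b} (Z \<omega>) :: real)"
    and "expectation (\<lambda>\<omega>. indicator {..a} (Y \<omega>) * indicator {..b} (Z \<omega>)) = joint_cdf M Y Z a b"
proof -
  have ind: "(\<lambda>\<omega>. indicator {..a} (Y \<omega>) * indicator {..b} (Z \<omega>) :: real) = indicator {\<omega>. Y \<omega> \<le> a \<and> Z \<omega> \<le> b}"
    by (auto simp: fun_eq_iff indicator_def)
  show "integrable M (\<lambda>\<omega>. indicator {..a} (Y \<omega>) * indicator {..b} (Z \<omega>) :: real)"
    by (rule integrable_const_bound[where B = 1]) (auto simp: indicator_def)
  have "{\<omega>. Y \<omega> \<le> a \<and> Z \<omega> \<le> b} \<inter> space M = {\<omega> \<in> space M. Y \<omega> \<le> a \<and> Z \<omega> \<le> b}" by auto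
  then show "expectation (\<lambda>\<omega>. indicator {..a} (Y \<omega>) * indicator {..b} (Z \<omega>)) = joint_cdf M Y Z a b"
    unfolding ind joint_cdf_def by simp
qed

lemma joint_cdf_self:
  assumes "Z \<in> borel_measurable M"
  shows "joint_cdf M Z Z c d = min (cdf_of M Z c) (cdf_of M Z d)"
  using min_of_mono[OF mono_cdf_of[OF assms]] by (simp add: joint_cdf_def cdf_of_def)

lemma expectation_step_sum_mult:
  fixes Y Z :: "'a \<Rightarrow> real"
  assumes [measurable]: "Y \<in> borel_measurable M" "Z \<in> borel_measurable M"
  shows "expectation (\<lambda>\<omega>. step_sum a b (Y \<omega>) * step_sum a b (Z \<omega>))
    = joint_cdf M Y Z a a + joint_cdf M Y Z a b + joint_cdf M Y Z b a + joint_cdf M Y Z b b"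
proof -
  note E = expectation_indicator_atMost_mult[OF assms]
  have "(\<lambda>\<omega>. step_sum a b (Y \<omega>) * step_sum a b (Z \<omega>)) = (\<lambda>\<omega>.
      indicator {..a} (Y \<omega>) * indicator {..a} (Z \<omega>) + indicator {..a} (Y \<omega>) * indicator {..b} (Z \<omega>) +
      indicator {..b} (Y \<omega>) * indicator {..a} (Z \<omega>) + indicator {..b} (Y \<omega>) * indicator {..b} (Z \<omega>))"
    by (simp add: step_sum_def fun_eq_iff algebra_simps)
  then show ?thesis using E by (simp add: E(2)[symmetric])
qed

lemma expectation_step_sum:
  assumes [measurable]: "Y \<in> borel_measurable M"
  shows "expectation (\<lambda>\<omega>. step_sum a b (Y \<omega>)) = cdf_of M Y a + cdf_of M Y b"
proof -
  have "(\<lambda>\<omega>. step_sum a b (Y \<omega>)) = (\<lambda>\<omega>. indicator {..a} (Y \<omega>) * indicator {..a} (Y \<omega>)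
      + indicator {..b} (Y \<omega>) * indicator {..b} (Y \<omega>))"
    by (auto simp: fun_eq_iff step_sum_def indicator_def)
  then show ?thesis using expectation_indicator_atMost_mult[OF assms assms] by (simp add: joint_cdf_self)
qed

lemma finite_var_step_sum:
  assumes [measurable]: "Y \<in> borel_measurable M"
  shows "finite_var M (step_sum a b \<circ> Y)"
proof -
  have "(step_sum a b z)^2 \<le> 4" for z by (auto simp: step_sum_def indicator_def)
  then have "integrable M (\<lambda>\<omega>. (step_sum a b (Y \<omega>))^2)"
    by (intro integrable_const_bound[where B = 4]) auto
  moreover have "step_sum a b \<circ> Y \<in> borel_measurable M" by measurable
  ultimately show ?thesis by (simp add: finite_var_def)
qed

lemma nondegenerate_step_sum:
  assumes [measurable]: "Y \<in> borel_measurable M"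
    and a: "0 < cdf_of M Y a" "cdf_of M Y a < 1" and b: "0 < cdf_of M Y b" "cdf_of M Y b < 1"
  shows "nondegenerate M (step_sum a b \<circ> Y)"
proof (rule nondegenerate_if_two_values[where a = 2 and b = 0])
  have "{\<omega> \<in> space M. (step_sum a b \<circ> Y) \<omega> = 2} = {\<omega> \<in> space M. Y \<omega> \<le> a \<and> Y \<omega> \<le> b}"
    by (auto simp: step_sum_def indicator_def)
  then show "prob {\<omega> \<in> space M. (step_sum a b \<circ> Y) \<omega> = 2} > 0"
    using joint_cdf_self[OF assms(1), of a b] a b by (simp add: joint_cdf_def)
  have "{\<omega> \<in> space M. (step_sum a b \<circ> Y) \<omega> = 0} = space M - {\<omega> \<in> space M. Y \<omega> \<le> max a b}"
    by (auto simp: step_sum_def indicator_def)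
  then have "prob {\<omega> \<in> space M. (step_sum a b \<circ> Y) \<omega> = 0} = 1 - max (cdf_of M Y a) (cdf_of M Y b)"
    using max_of_mono[OF mono_cdf_of[OF assms(1)]] prob_compl[of "{\<omega> \<in> space M. Y \<omega> \<le> max a b}"]
    by (simp add: cdf_of_def[symmetric])
  then show "prob {\<omega> \<in> space M. (step_sum a b \<circ> Y) \<omega> = 0} > 0" using a b by simp
qed measurable

lemma emeasure_distr_pair_atMost:
  fixes A B :: "'a \<Rightarrow> real"
  assumes [measurable]: "A \<in> borel_measurable M" "B \<in> borel_measurable M"
  shows "emeasure (distr M borel (\<lambda>\<omega>. (A \<omega>, B \<omega>))) {..(x, y)} = joint_cdf M A B x y"
proof -
  have [measurable]: "(\<lambda>\<omega>. (A \<omega>, B \<omega>)) \<in> borel_measurable M" by (simp add: borel_prod[symmetric])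
  have "(\<lambda>\<omega>. (A \<omega>, B \<omega>)) -` {..(x, y)} \<inter> space M = {\<omega> \<in> space M. A \<omega> \<le> x \<and> B \<omega> \<le> y}"
    by (auto simp: less_eq_prod_def)
  then show ?thesis by (simp add: emeasure_distr emeasure_eq_measure joint_cdf_def)
qed

lemma emeasure_distr_prod_atMost:
  assumes [measurable]: "X \<in> borel_measurable M"
  shows "emeasure (distr M borel X \<Otimes>\<^sub>M distr M borel X) {..(x, y)} = cdf_of M X x * cdf_of M X y"
proof -
  interpret D: prob_space "distr M borel X" by (rule prob_space_distr) simp
  have "emeasure (distr M borel X) {..t} = ennreal (cdf_of M X t)" for t
    unfolding cdf_of_eq_cdf[OF assms] cdf_def by (rule D.emeasure_eq_measure)
  moreover have "{..(x, y)} = {..x} \<times> {..y}" by (auto simp: less_eq_prod_def)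
  ultimately show ?thesis
    by (simp add: D.emeasure_pair_measure_Times ennreal_mult cdf_of_def)
qed

lemma nn_integral_distr_pair_square_sum:
  fixes A B :: "'a \<Rightarrow> real" and g :: "real \<Rightarrow> real"
  assumes [measurable]: "A \<in> borel_measurable M" "B \<in> borel_measurable M" "g \<in> borel_measurable borel"
    and "integrable M (\<lambda>\<omega>. (g (A \<omega>) + g (B \<omega>))^2)"
  shows "(\<integral>\<^sup>+z. ennreal ((g (fst z) + g (snd z))^2) \<partial>distr M borel (\<lambda>\<omega>. (A \<omega>, B \<omega>)))
    = ennreal (expectation (\<lambda>\<omega>. (g (A \<omega>) + g (B \<omega>))^2))"
proof -
  have [measurable]: "(\<lambda>\<omega>. (A \<omega>, B \<omega>)) \<in> borel_measurable M" by (simp add: borel_prod[symmetric])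
  have "(\<lambda>z. ennreal ((g (fst z) + g (snd z))^2)) \<in> borel_measurable borel"
    unfolding borel_prod[symmetric] by measurable
  then show ?thesis using assms(4) by (simp add: nn_integral_distr nn_integral_eq_integral)
qed

lemma nn_integral_pair_square_sum:
  fixes g :: "'a \<Rightarrow> real"
  assumes [measurable]: "g \<in> borel_measurable M" and sq: "integrable M (\<lambda>x. (g x)^2)"
  shows "(\<integral>\<^sup>+z. ennreal ((g (fst z) + g (snd z))^2) \<partial>(M \<Otimes>\<^sub>M M))
    = ennreal (2 * expectation (\<lambda>x. (g x)^2) + 2 * (expectation g)^2)"
proof -
  have int: "integrable M g" using sq by (rule square_integrable_imp_integrable[rotated]) simp
  define h where "h x = (g x)^2 + 2 * expectation g * g x + expectation (\<lambda>x. (g x)^2)" for x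
  have sum_sq: "(\<lambda>y. (g x + g y)^2) = (\<lambda>y. (g x)^2 + 2 * g x * g y + (g y)^2)" for x
    by (simp add: fun_eq_iff power2_sum)
  have inner: "(\<integral>\<^sup>+y. ennreal ((g x + g y)^2) \<partial>M) = ennreal (h x)" and h_nonneg: "0 \<le> h x" for x
  proof -
    have "integrable M (\<lambda>y. (g x + g y)^2)" unfolding sum_sq using int sq by simp
    moreover have "expectation (\<lambda>y. (g x + g y)^2) = h x"
      unfolding sum_sq h_def using int sq by (simp add: prob_space)
    ultimately show "(\<integral>\<^sup>+y. ennreal ((g x + g y)^2) \<partial>M) = ennreal (h x)" and "0 \<le> h x"
      by (simp_all add: nn_integral_eq_integral flip: \<open>expectation _ = h x\<close>)
  qed
  have "(\<lambda>z. ennreal ((g (fst z) + g (snd z))^2)) \<in> borel_measurable (M \<Otimes>\<^sub>M M)" by measurable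
  then have "(\<integral>\<^sup>+z. ennreal ((g (fst z) + g (snd z))^2) \<partial>(M \<Otimes>\<^sub>M M))
      = (\<integral>\<^sup>+x. \<integral>\<^sup>+y. ennreal ((g x + g y)^2) \<partial>M \<partial>M)"
    by (subst nn_integral_fst[symmetric]) simp_all
  also have "\<dots> = (\<integral>\<^sup>+x. ennreal (h x) \<partial>M)" by (simp add: inner)
  also have "\<dots> = ennreal (expectation h)"
    using int sq h_nonneg by (intro nn_integral_eq_integral) (simp_all add: h_def[abs_def])
  also have "expectation h = 2 * expectation (\<lambda>x. (g x)^2) + 2 * (expectation g)^2"
    using int sq by (simp add: h_def[abs_def] prob_space power2_eq_square)
  finally show ?thesis .
qed

lemma covar_quadratic_form_nonneg:
  fixes X :: "nat \<Rightarrow> 'a \<Rightarrow> real" and x :: "nat \<Rightarrow> real"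
  assumes fin_var: "\<And>i. i < d \<Longrightarrow> finite_var M (X i)"
  shows "0 \<le> (\<Sum>i<d. \<Sum>j<d. x i * covar M (X i) (X j) * x j)"
proof -
  define Y where "Y i \<omega> = X i \<omega> - expectation (X i)" for i \<omega>
  have Y_sq: "integrable M (\<lambda>\<omega>. (Y i \<omega>)^2)" and [measurable]: "Y i \<in> borel_measurable M" if "i < d" for i
  proof -
    have [measurable]: "X i \<in> borel_measurable M" and sq: "integrable M (\<lambda>\<omega>. (X i \<omega>)^2)"
      using fin_var[OF that] by (simp_all add: finite_var_def)
    have "integrable M (X i)" using sq by (rule square_integrable_imp_integrable[rotated]) simp
    then show "integrable M (\<lambda>\<omega>. (Y i \<omega>)^2)" using sq by (simp add: Y_def power2_diff)
    show "Y i \<in> borel_measurable M" unfolding Y_def by measurable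
  qed
  have YY: "integrable M (\<lambda>\<omega>. Y i \<omega> * Y j \<omega>)" if "i < d" "j < d" for i j
    using that by (intro integrable_mult_of_square_integrable Y_sq) simp_all
  have "(\<Sum>i<d. \<Sum>j<d. x i * covar M (X i) (X j) * x j)
      = (\<Sum>i<d. \<Sum>j<d. expectation (\<lambda>\<omega>. x i * (Y i \<omega> * Y j \<omega>) * x j))"
    by (simp add: covar_def Y_def)
  also have "\<dots> = (\<Sum>i<d. expectation (\<lambda>\<omega>. \<Sum>j<d. x i * (Y i \<omega> * Y j \<omega>) * x j))"
    by (intro sum.cong refl Bochner_Integration.integral_sum[symmetric]) (use YY in simp)
  also have "\<dots> = expectation (\<lambda>\<omega>. \<Sum>i<d. \<Sum>j<d. x i * (Y i \<omega> * Y j \<omega>) * x j)"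
    by (intro Bochner_Integration.integral_sum[symmetric] Bochner_Integration.integrable_sum) (use YY in simp)
  also have "\<dots> = expectation (\<lambda>\<omega>. (\<Sum>i<d. x i * Y i \<omega>)^2)"
    by (simp add: power2_eq_square sum_product ac_simps)
  also have "\<dots> \<ge> 0" by simp
  finally show ?thesis .
qed

lemma correlation_matrix_corr:
  assumes fin_var: "\<And>i. i < d \<Longrightarrow> finite_var M (X i)"
    and nondeg: "\<And>i. i < d \<Longrightarrow> nondegenerate M (X i)"
  shows "correlation_matrix d (\<lambda>i j. corr M (X i) (X j))"
  unfolding correlation_matrix_def
proof (intro conjI allI impI)
  fix i assume "i < d"
  then show "corr M (X i) (X i) = 1" using corr_self fin_var nondeg by blast
next
  fix i j show "corr M (X i) (X j) = corr M (X j) (X i)" by (rule corr_sym)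
next
  fix x :: "nat \<Rightarrow> real"
  define \<sigma> where "\<sigma> i = sqrt (var M (X i))" for i
  have "x i * corr M (X i) (X j) * x j = (x i / \<sigma> i) * covar M (X i) (X j) * (x j / \<sigma> j)" for i j
    by (simp add: corr_def \<sigma>_def real_sqrt_mult)
  then have "(\<Sum>i<d. \<Sum>j<d. x i * corr M (X i) (X j) * x j)
      = (\<Sum>i<d. \<Sum>j<d. (x i / \<sigma> i) * covar M (X i) (X j) * (x j / \<sigma> j))"
    by simp
  also have "\<dots> \<ge> 0" by (rule covar_quadratic_form_nonneg[OF fin_var])
  finally show "0 \<le> (\<Sum>i<d. \<Sum>j<d. x i * corr M (X i) (X j) * x j)" .
qed

lemma IC_iff_pairwise_inv_corr: "IC M d X \<longleftrightarrow> (\<forall>i<d. \<forall>j<d. \<exists>r. inv_corr M (X i) (X j) r)"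
proof
  assume "IC M d X"
  then show "\<forall>i<d. \<forall>j<d. \<exists>r. inv_corr M (X i) (X j) r" unfolding IC_def by blast
next
  assume pairwise: "\<forall>i<d. \<forall>j<d. \<exists>r. inv_corr M (X i) (X j) r"
  then have inv: "inv_corr M (X i) (X j) (corr M (X i) (X j))" if "i < d" "j < d" for i j
    using that unfolding inv_corr_def by blast
  then have "finite_var M (X i)" "nondegenerate M (X i)" if "i < d" for i
    using that unfolding inv_corr_def by blast+
  then have "correlation_matrix d (\<lambda>i j. corr M (X i) (X j))" by (rule correlation_matrix_corr)
  then show "IC M d X" unfolding IC_def using inv by blast
qed

end

section \<open>Mixtures of \<open>M\<close> and \<open>\<Pi>\<close>\<close>

definition M_Pi_mixture :: "real \<Rightarrow> real \<Rightarrow> real \<Rightarrow> real" where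
  "M_Pi_mixture r u v = r * min u v + (1 - r) * (u * v)"

lemma is_copula_average:
  assumes C: "is_copula C" and D: "is_copula D"
    and H: "\<And>u v. u \<in> {0..1} \<Longrightarrow> v \<in> {0..1} \<Longrightarrow> H u v = (C u v + D u v) / 2"
  shows "is_copula H"
  unfolding is_copula_def
proof (intro conjI ballI allI impI)
  fix u :: real assume u: "u \<in> {0..1}"
  then have "C u 0 = 0 \<and> C 0 u = 0 \<and> C u 1 = u \<and> C 1 u = u" "D u 0 = 0 \<and> D 0 u = 0 \<and> D u 1 = u \<and> D 1 u = u"
    using C D unfolding is_copula_def by blast+
  then show "H u 0 = 0" "H 0 u = 0" "H u 1 = u" "H 1 u = u"
    using u H[of u 0] H[of 0 u] H[of u 1] H[of 1 u] by simp_all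
next
  fix u1 u2 v1 v2 :: real assume uv: "0 \<le> u1 \<and> u1 \<le> u2 \<and> u2 \<le> 1 \<and> 0 \<le> v1 \<and> v1 \<le> v2 \<and> v2 \<le> 1"
  then have "0 \<le> C u2 v2 - C u2 v1 - C u1 v2 + C u1 v1" "0 \<le> D u2 v2 - D u2 v1 - D u1 v2 + D u1 v1"
    using C D unfolding is_copula_def by blast+
  then show "0 \<le> H u2 v2 - H u2 v1 - H u1 v2 + H u1 v1"
    using uv H[of u2 v2] H[of u2 v1] H[of u1 v2] H[of u1 v1] by simp
qed

lemma is_copula_M_Pi_mixture_imp_weight:
  assumes "is_copula (M_Pi_mixture r)"
  shows "r \<in> {0..1}"
  unfolding atLeastAtMost_iff
proof
  let ?H = "M_Pi_mixture r"
  have volume: "0 \<le> ?H u2 v2 - ?H u2 v1 - ?H u1 v2 + ?H u1 v1"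
    if "0 \<le> u1" "u1 \<le> u2" "u2 \<le> 1" "0 \<le> v1" "v1 \<le> v2" "v2 \<le> 1" for u1 u2 v1 v2
    using assms that unfolding is_copula_def by blast
  show "r \<le> 1" using volume[of 0 "1/2" "1/2" 1] by (simp add: M_Pi_mixture_def)
  show "0 \<le> r"
  proof (rule ccontr)
    assume "\<not> 0 \<le> r"
    define h where "h = - r / (2 * (1 - r))"
    \<comment> \<open>the mixture then assigns the square \<open>[0,h]\<^sup>2\<close> the mass \<open>h (r + (1 - r) h) = h r / 2 < 0\<close>\<close>
    have "0 < h" "h \<le> 1" using \<open>\<not> 0 \<le> r\<close> by (auto simp: h_def field_simps)
    then have "0 \<le> ?H h h - ?H h 0 - ?H 0 h + ?H 0 0" by (intro volume) auto
    also have "\<dots> = h * (r + (1 - r) * h)"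
      using \<open>0 < h\<close> by (simp add: M_Pi_mixture_def algebra_simps)
    also have "(1 - r) * h = - r / 2"
      using \<open>\<not> 0 \<le> r\<close> unfolding h_def by (simp add: field_simps)
    finally show False using \<open>0 < h\<close> \<open>\<not> 0 \<le> r\<close> by (simp add: zero_le_mult_iff)
  qed
qed

lemma eq_M_Pi_mixture_if_interior:
  assumes "is_copula H"
    and interior: "\<And>u v. 0 < u \<Longrightarrow> u < 1 \<Longrightarrow> 0 < v \<Longrightarrow> v < 1 \<Longrightarrow> H u v = M_Pi_mixture r u v"
    and "u \<in> {0..1}" "v \<in> {0..1}"
  shows "H u v = M_Pi_mixture r u v"
proof (cases "0 < u \<and> u < 1 \<and> 0 < v \<and> v < 1")
  case False
  have "H u 0 = 0 \<and> H 0 u = 0 \<and> H u 1 = u \<and> H 1 u = u" "H v 0 = 0 \<and> H 0 v = 0 \<and> H v 1 = v \<and> H 1 v = v"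
    using assms(1,3,4) unfolding is_copula_def by blast+
  moreover have "u = 0 \<or> u = 1 \<or> v = 0 \<or> v = 1" using False assms(3,4) by auto
  ultimately show ?thesis using assms(3,4) by (auto simp: M_Pi_mixture_def algebra_simps)
qed (use interior in blast)

lemma ennreal_mixture:
  fixes r u v :: real
  assumes "r \<in> {0..1}" "0 \<le> u" "0 \<le> v"
  shows "ennreal (2 * r) * ennreal u + ennreal (2 * (1 - r)) * ennreal v = ennreal (2 * r * u + 2 * (1 - r) * v)"
proof -
  have "0 \<le> 2 * r" "0 \<le> 2 * (1 - r)" "0 \<le> 2 * r * u" "0 \<le> 2 * (1 - r) * v" using assms by simp_all
  then show ?thesis using assms(2,3) by (simp add: ennreal_mult ennreal_plus)
qed

lemma ennreal_twice_eq_mixture_iff: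
  fixes a b c r :: real
  assumes "0 \<le> a" "0 \<le> b" "0 \<le> c" "r \<in> {0..1}"
  shows "ennreal a + ennreal a = ennreal (2 * r) * ennreal b + ennreal (2 * (1 - r)) * ennreal c
    \<longleftrightarrow> a = r * b + (1 - r) * c"
proof -
  have "ennreal a + ennreal a = ennreal (2 * a)"
    using assms(1) by (simp add: ennreal_plus[symmetric] del: ennreal_plus)
  then have "ennreal a + ennreal a = ennreal (2 * r) * ennreal b + ennreal (2 * (1 - r)) * ennreal c
      \<longleftrightarrow> ennreal (2 * a) = ennreal (2 * r * b + 2 * (1 - r) * c)"
    using ennreal_mixture[OF assms(4,2,3)] by (simp only:)
  also have "\<dots> \<longleftrightarrow> 2 * a = 2 * r * b + 2 * (1 - r) * c"
    using assms by (intro ennreal_inj) simp_all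
  also have "\<dots> \<longleftrightarrow> a = r * b + (1 - r) * c"
    unfolding mult.assoc by (rule iffI) linarith+
  finally show ?thesis .
qed

section \<open>Pairs with invariant correlation\<close>

definition sym_copula_eq_mixture :: "'a measure \<Rightarrow> ('a \<Rightarrow> real) \<Rightarrow> ('a \<Rightarrow> real) \<Rightarrow> real \<Rightarrow> bool" where
  "sym_copula_eq_mixture M X Y r \<longleftrightarrow> (\<forall>C D. copula_of M X Y C \<longrightarrow> copula_of M Y X D \<longrightarrow>
     (\<forall>u\<in>{0..1}. \<forall>v\<in>{0..1}. (C u v + D u v) / 2 = M_Pi_mixture r u v))"

context prob_space
begin

context
  fixes X Y :: "'a \<Rightarrow> real"
  assumes X [measurable]: "X \<in> borel_measurable M" and Y [measurable]: "Y \<in> borel_measurable M"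
    and distr_eq: "distr M borel X = distr M borel Y"
begin

lemma cdf_of_eq: "cdf_of M Y = cdf_of M X"
  using cdf_of_eq_cdf[OF X] cdf_of_eq_cdf[OF Y] distr_eq by simp

lemma inv_corr_imp_step_sum_identity:
  assumes inv: "inv_corr M X Y r"
    and a: "0 < cdf_of M X a" "cdf_of M X a < 1" and b: "0 < cdf_of M X b" "cdf_of M X b < 1"
  shows "joint_cdf M X Y a a + joint_cdf M X Y a b + joint_cdf M X Y b a + joint_cdf M X Y b b
    = r * (cdf_of M X a + cdf_of M X b + 2 * min (cdf_of M X a) (cdf_of M X b))
      + (1 - r) * (cdf_of M X a + cdf_of M X b)^2"
proof -
  let ?G = "step_sum a b"
  have X_admissible: "finite_var M (?G \<circ> X)" "nondegenerate M (?G \<circ> X)"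
    using finite_var_step_sum[OF X] nondegenerate_step_sum[OF X a b] .
  have "finite_var M (?G \<circ> Y)" "nondegenerate M (?G \<circ> Y)"
    using finite_var_step_sum[OF Y] nondegenerate_step_sum[OF Y] a b by (simp_all add: cdf_of_eq)
  then have "corr M (?G \<circ> X) (?G \<circ> Y) = r"
    using inv X_admissible borel_measurable_step_sum unfolding inv_corr_def by blast
  moreover have "distr M borel (?G \<circ> X) = distr M borel (?G \<circ> Y)"
    by (rule distr_comp_eq_of_distr_eq[OF X Y _ distr_eq]) simp
  ultimately have "expectation (\<lambda>\<omega>. ?G (X \<omega>) * ?G (Y \<omega>))
      = r * expectation (\<lambda>\<omega>. ?G (X \<omega>) * ?G (X \<omega>)) + (1 - r) * (expectation (\<lambda>\<omega>. ?G (X \<omega>)))^2"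
    using corr_eq_iff_moment_identity[of "?G \<circ> X" "?G \<circ> Y" r] X_admissible
    by (simp add: comp_def power2_eq_square)
  then show ?thesis
    using expectation_step_sum_mult[OF X Y] expectation_step_sum_mult[OF X X] expectation_step_sum[OF X]
    by (simp add: joint_cdf_self min.commute)
qed

lemma inv_corr_imp_quadrant_identity:
  assumes inv: "inv_corr M X Y r"
    and x: "0 < cdf_of M X x" "cdf_of M X x < 1" and y: "0 < cdf_of M X y" "cdf_of M X y < 1"
  shows "joint_cdf M X Y x y + joint_cdf M Y X x y = 2 * M_Pi_mixture r (cdf_of M X x) (cdf_of M X y)"
proof -
  have "joint_cdf M Y X x y = joint_cdf M X Y y x" by (simp add: joint_cdf_def conj_commute)
  then show ?thesis
    using inv_corr_imp_step_sum_identity[OF inv x x] inv_corr_imp_step_sum_identity[OF inv y y]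
      inv_corr_imp_step_sum_identity[OF inv x y]
    by (simp add: M_Pi_mixture_def power2_eq_square algebra_simps)
qed

lemma sym_joint_distr_eq_mixture:
  assumes r: "r \<in> {0..1}"
    and quadrant: "\<And>x y. joint_cdf M X Y x y + joint_cdf M Y X x y = 2 * M_Pi_mixture r (cdf_of M X x) (cdf_of M X y)"
  shows "add_measure (distr M borel (\<lambda>\<omega>. (X \<omega>, Y \<omega>))) (distr M borel (\<lambda>\<omega>. (Y \<omega>, X \<omega>)))
    = add_measure (scale_measure (ennreal (2 * r)) (distr M borel (\<lambda>\<omega>. (X \<omega>, X \<omega>))))
        (scale_measure (ennreal (2 * (1 - r))) (distr M borel X \<Otimes>\<^sub>M distr M borel X))"
    (is "?XY_YX = ?mixture")
proof (rule measure_eqI_atMost)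
  let ?F = "cdf_of M X"
  have sets_DD: "sets (distr M borel X \<Otimes>\<^sub>M distr M borel X) = sets borel"
    by (metis borel_prod sets_distr sets_pair_measure_cong)
  then show "sets ?mixture = sets borel" by simp
  show "sets ?XY_YX = sets borel" by simp
  fix z :: "real \<times> real"
  obtain x y where z: "z = (x, y)" by (cases z)
  have F_nonneg: "0 \<le> ?F t" for t by (simp add: cdf_of_def)
  have "emeasure ?XY_YX {..z} = ennreal (joint_cdf M X Y x y) + ennreal (joint_cdf M Y X x y)"
    by (simp add: z emeasure_add_measure emeasure_distr_pair_atMost)
  also have "\<dots> = ennreal (2 * M_Pi_mixture r (?F x) (?F y))"
    unfolding quadrant[of x y, symmetric] by (rule ennreal_plus[symmetric]) (simp_all add: joint_cdf_def)
  finally have XY_YX: "emeasure ?XY_YX {..z} = ennreal (2 * M_Pi_mixture r (?F x) (?F y))" .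
  then show "emeasure ?XY_YX {..z} \<noteq> \<infinity>" by simp
  have "emeasure ?mixture {..z} = ennreal (2 * r) * ennreal (min (?F x) (?F y)) + ennreal (2 * (1 - r)) * ennreal (?F x * ?F y)"
    using sets_DD by (simp add: z emeasure_add_measure emeasure_distr_pair_atMost joint_cdf_self emeasure_distr_prod_atMost)
  also have "\<dots> = ennreal (2 * r * min (?F x) (?F y) + 2 * (1 - r) * (?F x * ?F y))"
    using F_nonneg[of x] F_nonneg[of y] by (intro ennreal_mixture[OF r]) simp_all
  also have "\<dots> = ennreal (2 * M_Pi_mixture r (?F x) (?F y))"
    by (simp add: M_Pi_mixture_def algebra_simps)
  finally show "emeasure ?XY_YX {..z} = emeasure ?mixture {..z}" unfolding XY_YX ..
qed

lemma integral_square_sum_of_distr_eq: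
  fixes g :: "real \<Rightarrow> real"
  assumes g [measurable]: "g \<in> borel_measurable borel"
    and sq: "integrable M (\<lambda>\<omega>. (g (X \<omega>))^2)"
  shows "integrable M (\<lambda>\<omega>. (g (X \<omega>) + g (Y \<omega>))^2)"
    and "expectation (\<lambda>\<omega>. (g (X \<omega>) + g (Y \<omega>))^2)
      = 2 * expectation (\<lambda>\<omega>. (g (X \<omega>))^2) + 2 * expectation (\<lambda>\<omega>. g (X \<omega>) * g (Y \<omega>))"
proof -
  note transfer = integral_comp_eq_of_distr_eq[OF X Y _ distr_eq]
  have sqY: "integrable M (\<lambda>\<omega>. (g (Y \<omega>))^2)" using sq transfer(1)[where h = "\<lambda>x. (g x)^2"] by simp
  have "(\<lambda>\<omega>. (g (X \<omega>) + g (Y \<omega>))^2) = (\<lambda>\<omega>. (g (X \<omega>))^2 + (g (Y \<omega>))^2 + 2 * (g (X \<omega>) * g (Y \<omega>)))"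
    by (simp add: fun_eq_iff power2_sum)
  moreover have "integrable M (\<lambda>\<omega>. g (X \<omega>) * g (Y \<omega>))"
    by (rule integrable_mult_of_square_integrable[OF _ _ sq sqY]) simp_all
  moreover have "expectation (\<lambda>\<omega>. (g (Y \<omega>))^2) = expectation (\<lambda>\<omega>. (g (X \<omega>))^2)"
    using transfer(2)[where h = "\<lambda>x. (g x)^2"] by simp
  ultimately show "integrable M (\<lambda>\<omega>. (g (X \<omega>) + g (Y \<omega>))^2)"
    "expectation (\<lambda>\<omega>. (g (X \<omega>) + g (Y \<omega>))^2)
      = 2 * expectation (\<lambda>\<omega>. (g (X \<omega>))^2) + 2 * expectation (\<lambda>\<omega>. g (X \<omega>) * g (Y \<omega>))"
    using sq sqY by simp_all
qed

lemma quadrant_identity_imp_moment_identity: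
  assumes r: "r \<in> {0..1}"
    and quadrant: "\<And>x y. joint_cdf M X Y x y + joint_cdf M Y X x y = 2 * M_Pi_mixture r (cdf_of M X x) (cdf_of M X y)"
    and g [measurable]: "g \<in> borel_measurable borel"
    and sq: "integrable M (\<lambda>\<omega>. (g (X \<omega>))^2)"
  shows "expectation (\<lambda>\<omega>. g (X \<omega>) * g (Y \<omega>))
    = r * expectation (\<lambda>\<omega>. (g (X \<omega>))^2) + (1 - r) * (expectation (\<lambda>\<omega>. g (X \<omega>)))^2"
proof -
  define s where "s = expectation (\<lambda>\<omega>. (g (X \<omega>))^2)"
  define m where "m = expectation (\<lambda>\<omega>. g (X \<omega>))"
  define p where "p = expectation (\<lambda>\<omega>. g (X \<omega>) * g (Y \<omega>))"
  let ?D = "distr M borel X"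
  interpret D: prob_space ?D by (rule prob_space_distr) simp
  define \<phi> :: "real \<times> real \<Rightarrow> ennreal" where "\<phi> z = ennreal ((g (fst z) + g (snd z))^2)" for z
  have \<phi>_measurable: "\<phi> \<in> borel_measurable N" if "sets N = sets borel" for N
  proof -
    have "\<phi> \<in> borel_measurable borel" unfolding \<phi>_def borel_prod[symmetric] by measurable
    then show ?thesis by (subst measurable_cong_sets[OF that refl])
  qed
  have sets_DD: "sets (?D \<Otimes>\<^sub>M ?D) = sets borel"
    by (metis borel_prod sets_distr sets_pair_measure_cong)
  note E_sum = integral_square_sum_of_distr_eq[OF g sq, folded s_def p_def]
  have XY: "integral\<^sup>N (distr M borel (\<lambda>\<omega>. (X \<omega>, Y \<omega>))) \<phi> = ennreal (2 * s + 2 * p)"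
    and YX: "integral\<^sup>N (distr M borel (\<lambda>\<omega>. (Y \<omega>, X \<omega>))) \<phi> = ennreal (2 * s + 2 * p)"
    using nn_integral_distr_pair_square_sum[OF X Y g] nn_integral_distr_pair_square_sum[OF Y X g] E_sum
    by (simp_all add: \<phi>_def[abs_def] add.commute)
  have "(\<lambda>\<omega>. (g (X \<omega>) + g (X \<omega>))^2) = (\<lambda>\<omega>. 4 * (g (X \<omega>))^2)"
    by (simp add: fun_eq_iff power2_eq_square algebra_simps)
  then have XX: "integral\<^sup>N (distr M borel (\<lambda>\<omega>. (X \<omega>, X \<omega>))) \<phi> = ennreal (4 * s)"
    using nn_integral_distr_pair_square_sum[OF X X g] sq by (simp add: \<phi>_def[abs_def] s_def)
  have "integrable ?D (\<lambda>x. (g x)^2)" using sq by (simp add: integrable_distr_eq)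
  then have DD: "integral\<^sup>N (?D \<Otimes>\<^sub>M ?D) \<phi> = ennreal (2 * s + 2 * m^2)"
    using D.nn_integral_pair_square_sum[of g] by (simp add: \<phi>_def[abs_def] integral_distr s_def m_def)
  have "integral\<^sup>N (add_measure (distr M borel (\<lambda>\<omega>. (X \<omega>, Y \<omega>))) (distr M borel (\<lambda>\<omega>. (Y \<omega>, X \<omega>)))) \<phi>
      = integral\<^sup>N (add_measure (scale_measure (ennreal (2 * r)) (distr M borel (\<lambda>\<omega>. (X \<omega>, X \<omega>))))
          (scale_measure (ennreal (2 * (1 - r))) (?D \<Otimes>\<^sub>M ?D))) \<phi>"
    by (simp only: sym_joint_distr_eq_mixture[OF r quadrant])
  then have "ennreal (2 * s + 2 * p) + ennreal (2 * s + 2 * p)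
      = ennreal (2 * r) * ennreal (4 * s) + ennreal (2 * (1 - r)) * ennreal (2 * s + 2 * m^2)"
    using sets_DD \<phi>_measurable \<phi>_measurable[OF sets_DD]
    by (simp add: nn_integral_add_measure nn_integral_scale_measure XY YX XX DD)
  moreover have "0 \<le> 2 * s + 2 * p"
    using E_sum(2) Bochner_Integration.integral_nonneg[of M "\<lambda>\<omega>. (g (X \<omega>) + g (Y \<omega>))^2"] by simp
  moreover have "0 \<le> s" unfolding s_def by (rule Bochner_Integration.integral_nonneg) simp
  ultimately have "2 * s + 2 * p = r * (4 * s) + (1 - r) * (2 * s + 2 * m^2)"
    using ennreal_twice_eq_mixture_iff[of "2 * s + 2 * p" "4 * s" "2 * s + 2 * m^2" r] r by simp
  then show ?thesis
    unfolding s_def[symmetric] m_def[symmetric] p_def[symmetric] by (simp add: algebra_simps)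
qed

context
  assumes atomless: "\<And>x. prob {\<omega> \<in> space M. X \<omega> = x} = 0"
begin

lemma atomless_Y: "prob {\<omega> \<in> space M. Y \<omega> = y} = 0"
proof -
  have "measure (distr M borel Z) {y} = prob {\<omega> \<in> space M. Z \<omega> = y}" if "Z \<in> borel_measurable M" for Z
  proof -
    have "Z -` {y} \<inter> space M = {\<omega> \<in> space M. Z \<omega> = y}" by auto
    then show ?thesis using that by (simp add: measure_distr)
  qed
  then show ?thesis using atomless[of y] distr_eq X Y by metis
qed

lemma ex_copula_of_pair: "\<exists>C D. copula_of M X Y C \<and> copula_of M Y X D"
  using ex_copula_of[OF X Y atomless atomless_Y] ex_copula_of[OF Y X atomless_Y atomless] by blast

lemma sym_copula_eq_mixture_imp_weight:
  assumes "sym_copula_eq_mixture M X Y r"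
  shows "r \<in> {0..1}"
proof -
  obtain C D where C: "copula_of M X Y C" and D: "copula_of M Y X D" using ex_copula_of_pair by blast
  then have "is_copula C" "is_copula D" by (simp_all add: copula_of_def)
  then have "is_copula (M_Pi_mixture r)"
    by (rule is_copula_average) (use assms C D in \<open>simp add: sym_copula_eq_mixture_def\<close>)
  then show ?thesis by (rule is_copula_M_Pi_mixture_imp_weight)
qed

lemma sym_copula_eq_mixture_imp_quadrant_identity:
  assumes "sym_copula_eq_mixture M X Y r"
  shows "joint_cdf M X Y x y + joint_cdf M Y X x y = 2 * M_Pi_mixture r (cdf_of M X x) (cdf_of M X y)"
proof -
  obtain C D where C: "copula_of M X Y C" and D: "copula_of M Y X D" using ex_copula_of_pair by blast
  have "cdf_of M X t \<in> {0..1}" for t using cdf_of_le_1[OF X] by (simp add: cdf_of_def)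
  then have "(C (cdf_of M X x) (cdf_of M X y) + D (cdf_of M X x) (cdf_of M X y)) / 2
      = M_Pi_mixture r (cdf_of M X x) (cdf_of M X y)"
    using assms C D unfolding sym_copula_eq_mixture_def by blast
  moreover have "joint_cdf M X Y x y = C (cdf_of M X x) (cdf_of M X y)"
    "joint_cdf M Y X x y = D (cdf_of M X x) (cdf_of M X y)"
    using joint_cdf_eq_copula[OF C] joint_cdf_eq_copula[OF D] by (simp_all add: cdf_of_eq)
  ultimately show ?thesis by simp
qed

lemma quadrant_identity_imp_sym_copula_eq_mixture:
  assumes quadrant: "\<And>x y. 0 < cdf_of M X x \<Longrightarrow> cdf_of M X x < 1 \<Longrightarrow> 0 < cdf_of M X y \<Longrightarrow> cdf_of M X y < 1 \<Longrightarrow>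
      joint_cdf M X Y x y + joint_cdf M Y X x y = 2 * M_Pi_mixture r (cdf_of M X x) (cdf_of M X y)"
  shows "sym_copula_eq_mixture M X Y r"
  unfolding sym_copula_eq_mixture_def
proof (intro allI impI ballI)
  fix C D and u v :: real assume C: "copula_of M X Y C" and D: "copula_of M Y X D" and "u \<in> {0..1}" "v \<in> {0..1}"
  have "is_copula C" "is_copula D" using C D by (simp_all add: copula_of_def)
  then have "is_copula (\<lambda>u v. (C u v + D u v) / 2)" by (rule is_copula_average) simp
  then show "(C u v + D u v) / 2 = M_Pi_mixture r u v"
  proof (rule eq_M_Pi_mixture_if_interior[OF _ _ \<open>u \<in> {0..1}\<close> \<open>v \<in> {0..1}\<close>])
    fix u v :: real assume "0 < u" "u < 1" "0 < v" "v < 1"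
    obtain x where x: "cdf_of M X x = u" using cdf_of_surj[OF X atomless \<open>0 < u\<close> \<open>u < 1\<close>] ..
    obtain y where y: "cdf_of M X y = v" using cdf_of_surj[OF X atomless \<open>0 < v\<close> \<open>v < 1\<close>] ..
    have "joint_cdf M X Y x y = C (cdf_of M X x) (cdf_of M X y)"
      "joint_cdf M Y X x y = D (cdf_of M X x) (cdf_of M X y)"
      using joint_cdf_eq_copula[OF C] joint_cdf_eq_copula[OF D] by (simp_all add: cdf_of_eq)
    then show "(C u v + D u v) / 2 = M_Pi_mixture r u v"
      using quadrant[of x y] x y \<open>0 < u\<close> \<open>u < 1\<close> \<open>0 < v\<close> \<open>v < 1\<close> by simp
  qed
qed

lemma sym_copula_eq_mixture_imp_inv_corr:
  assumes fin_var: "finite_var M X" and r: "r \<in> {0..1}" and sym: "sym_copula_eq_mixture M X Y r"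
  shows "inv_corr M X Y r"
proof -
  have admissible: "finite_var M (g \<circ> Y) \<and> nondegenerate M (g \<circ> Y)"
    and corr_comp: "corr M (g \<circ> X) (g \<circ> Y) = r"
    if [measurable]: "g \<in> borel_measurable borel" and "finite_var M (g \<circ> X)" "nondegenerate M (g \<circ> X)" for g
  proof -
    have "distr M borel (g \<circ> X) = distr M borel (g \<circ> Y)"
      by (rule distr_comp_eq_of_distr_eq[OF X Y _ distr_eq]) simp
    moreover have "g \<circ> X \<in> borel_measurable M" "g \<circ> Y \<in> borel_measurable M" by measurable
    moreover have "integrable M (\<lambda>\<omega>. (g (X \<omega>))^2)" using that(2) by (simp add: finite_var_def)
    ultimately show "finite_var M (g \<circ> Y) \<and> nondegenerate M (g \<circ> Y)" "corr M (g \<circ> X) (g \<circ> Y) = r"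
      using that(2,3) corr_eq_iff_moment_identity[of "g \<circ> X" "g \<circ> Y" r]
        quadrant_identity_imp_moment_identity[OF r sym_copula_eq_mixture_imp_quadrant_identity[OF sym]]
      by (simp_all add: finite_var_iff_distr nondegenerate_iff_distr comp_def)
  qed
  have X_admissible: "finite_var M X" "nondegenerate M X"
    using fin_var nondegenerate_if_atomless[OF X atomless] .
  have "(\<lambda>x::real. x) \<in> borel_measurable borel" by simp
  from admissible[OF this] corr_comp[OF this] X_admissible
  have "finite_var M Y" "nondegenerate M Y" "corr M X Y = r" by (simp_all add: o_def)
  with X_admissible show ?thesis
    unfolding inv_corr_def using admissible corr_comp by blast
qed

lemma ex_inv_corr_iff_sym_copula_eq_mixture:
  assumes "finite_var M X"
  shows "(\<exists>r. inv_corr M X Y r) \<longleftrightarrow> (\<exists>r\<in>{0..1}. sym_copula_eq_mixture M X Y r)"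
proof
  assume "\<exists>r. inv_corr M X Y r"
  then obtain r where "inv_corr M X Y r" ..
  then have "sym_copula_eq_mixture M X Y r"
    by (intro quadrant_identity_imp_sym_copula_eq_mixture inv_corr_imp_quadrant_identity)
  then show "\<exists>r\<in>{0..1}. sym_copula_eq_mixture M X Y r"
    using sym_copula_eq_mixture_imp_weight by blast
next
  assume "\<exists>r\<in>{0..1}. sym_copula_eq_mixture M X Y r"
  then show "\<exists>r. inv_corr M X Y r" using sym_copula_eq_mixture_imp_inv_corr[OF assms] by blast
qed

end

end

end

theorem proposition7:
  fixes M :: "'a measure" and d :: nat and X :: "nat \<Rightarrow> 'a \<Rightarrow> real"
  assumes "prob_space M"
    and "d \<ge> 2"
    and rv: "\<And>i. i < d \<Longrightarrow> X i \<in> borel_measurable M"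
    and continuous: "\<And>i x. i < d \<Longrightarrow> measure M {\<omega> \<in> space M. X i \<omega> = x} = 0"
    and identical: "\<And>i j. i < d \<Longrightarrow> j < d \<Longrightarrow> distr M borel (X i) = distr M borel (X j)"
    and fin_var: "\<And>i. i < d \<Longrightarrow> integrable M (\<lambda>\<omega>. (X i \<omega>)^2)"
    and nonzero_var: "\<And>i. i < d \<Longrightarrow> var M (X i) \<noteq> 0"
  shows "IC M d X \<longleftrightarrow>
    (\<forall>i<d. \<forall>j<d. i \<noteq> j \<longrightarrow>
       (\<exists>r\<in>{0..1}. \<forall>C D. copula_of M (X i) (X j) C \<longrightarrow> copula_of M (X j) (X i) D \<longrightarrow>
          (\<forall>u\<in>{0..1}. \<forall>v\<in>{0..1}.
             (C u v + D u v) / 2 = r * min u v + (1 - r) * (u * v))))"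
proof -
  interpret prob_space M by fact
  have finite_var: "finite_var M (X i)" if "i < d" for i
    using rv[OF that] fin_var[OF that] by (simp add: finite_var_def)
  have pair: "(\<exists>r. inv_corr M (X i) (X j) r) \<longleftrightarrow> (\<exists>r\<in>{0..1}. sym_copula_eq_mixture M (X i) (X j) r)"
    if "i < d" "j < d" for i j
    using ex_inv_corr_iff_sym_copula_eq_mixture[OF rv[OF that(1)] rv[OF that(2)] identical[OF that]
        continuous[OF that(1)] finite_var[OF that(1)]] .
  have diagonal: "\<exists>r. inv_corr M (X i) (X i) r" if "i < d" for i
    using inv_corr_self[OF finite_var[OF that] nondegenerate_if_atomless[OF rv continuous, OF that that]] ..
  have "IC M d X \<longleftrightarrow> (\<forall>i<d. \<forall>j<d. i \<noteq> j \<longrightarrow> (\<exists>r\<in>{0..1}. sym_copula_eq_mixture M (X i) (X j) r))"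
    unfolding IC_iff_pairwise_inv_corr using pair diagonal by metis
  then show ?thesis by (simp add: sym_copula_eq_mixture_def M_Pi_mixture_def)
qed

end
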